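(* Let $d,M$ be positive integers with $M\ge2$ and let $\mathcal{V}_J=\{v_j(\mathbf{z},\mathbf{y}_M,\dots,\mathbf{y}_1):j\in J\}$ be a family of real-valued functions on $(\mathbb{R}^d)^{M+1}$ satisfying (b1), (b4), (b5) and (b6). Then for any $r$ with $2\le r\le M$, any $(\boldsymbol{\beta}_M,\dots,\boldsymbol{\beta}_1)\in(\mathbb{R}^d)^M$, any positive-measure set $\mathcal{Z}_r\subset(\mathbb{R}^d)^r$ and any finite $S_0\subset J^r$: the family $\{v_{j_r}(\mathbf{z}_r,\dots,\mathbf{z}_1,\boldsymbol{\beta}_M,\dots,\boldsymbol{\beta}_r)\cdots v_{j_1}(\mathbf{z}_1,\boldsymbol{\beta}_M,\dots,\boldsymbol{\beta}_1):(j_r,\dots,j_1)\in S_0\}$ contains linearly dependent functions (on $(\mathbf{z}_r,\dots,\mathbf{z}_1)\in\mathcal{Z}_r$) only if there exists $\ell\le r$ such that the family $\{v_{j_\ell}(\mathbf{z}_\ell,\dots,\mathbf{z}_1,\boldsymbol{\beta}_M,\dots,\boldsymbol{\beta}_\ell):j_\ell\in J_\ell\}$, where $J_\ell=\{j_\ell\in J:\exists(j_r,\dots,j_1)\in S_0\text{ with this }j_\ell\}$, contains linearly dependent functions on $(\mathbf{z}_\ell,\dots,\mathbf{z}_1)\in\pi_{\{\ell,\dots,1\}}(\mathcal{Z}_r)$.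
   Context: Measures are Lebesgue. Linear dependence of a finite family on a set $D$ means some nontrivial linear combination vanishes at every point of $D$. $\pi_{\{\ell,\dots,1\}}(\mathcal{Z}_r)=\{(\mathbf{z}_\ell,\dots,\mathbf{z}_1):(\mathbf{z}_r,\dots,\mathbf{z}_1)\in\mathcal{Z}_r\}$ is the coordinate projection. Each factor $v_{j_\ell}(\mathbf{z}_\ell,\mathbf{z}_{\ell-1},\dots,\mathbf{z}_1,\boldsymbol{\beta}_M,\dots,\boldsymbol{\beta}_\ell)$ denotes $v_{j_\ell}$ with first argument $\mathbf{z}_\ell$ and remaining $M$ arguments (in order) $\mathbf{z}_{\ell-1},\dots,\mathbf{z}_1,\boldsymbol{\beta}_M,\dots,\boldsymbol{\beta}_\ell$. Assumptions: (b1) $v_j>0$ everywhere for all $j$. (b4) There is a full-measure $\mathcal{Y}\subset(\mathbb{R}^d)^M$ such that for all positive-measure $\mathcal{Y}'\subset\mathcal{Y}$, $\mathcal{Z}\subset\mathbb{R}^d$, every finite subfamily of $\mathcal{V}_J$ is linearly independent on $\mathcal{Z}\times\mathcal{Y}'$. (b5) For any $1\le\ell\le M$, $(\boldsymbol{\beta}_\ell,\dots,\boldsymbol{\beta}_1)\in(\mathbb{R}^d)^\ell$, positive-measure $\mathcal{Z}\subset\mathbb{R}^d$, $\mathcal{Y}\subset(\mathbb{R}^d)^{M-\ell}$, and finite $J_0\subset J$: $\{v_j(\mathbf{z},\mathbf{y}_M,\dots,\mathbf{y}_{\ell+1},\boldsymbol{\beta}_\ell,\dots,\boldsymbol{\beta}_1):j\in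 J_0\}$ is linearly dependent on $\mathcal{Z}\times\mathcal{Y}$ only if there are $j\ne j'\in J_0$ for which these two functions coincide on all of $(\mathbb{R}^d)^{M-\ell+1}$. (b6) Each $v_j$ is continuous in $(\mathbf{y}_M,\dots,\mathbf{y}_1)$. *)

theory Defs
  imports "HOL-Analysis.Analysis"
begin

text \<open>A point of (R^d)^k with coordinates indexed by a finite index set I (e.g. I = {1..k})
  is a function nat => 'a, extensional on I.\<close>
definition tupM :: "nat set \<Rightarrow> (nat \<Rightarrow> 'a::euclidean_space) measure" where
  "tupM I = completion (Pi\<^sub>M I (\<lambda>_. lborel))"

definition pos_meas :: "'b measure \<Rightarrow> 'b set \<Rightarrow> bool" where
  "pos_meas \<mu> A \<longleftrightarrow> A \<in> sets \<mu> \<and> emeasure \<mu> A > 0"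

definition full_meas :: "'b measure \<Rightarrow> 'b set \<Rightarrow> bool" where
  "full_meas \<mu> A \<longleftrightarrow> A \<in> sets \<mu> \<and> A \<subseteq> space \<mu> \<and> emeasure \<mu> (space \<mu> - A) = 0"

definition lin_dep_on :: "'p set \<Rightarrow> 'i set \<Rightarrow> ('i \<Rightarrow> 'p \<Rightarrow> real) \<Rightarrow> bool" where
  "lin_dep_on D F f \<longleftrightarrow>
     (\<exists>c. (\<exists>i\<in>F. c i \<noteq> 0) \<and> (\<forall>x\<in>D. (\<Sum>i\<in>F. c i * f i x) = 0))"

text \<open>The last M arguments (y_M,...,y_1) of v, stored as y i = y_i, for the call
  v(z, y_M,...,y_{l+1}, beta_l,...,beta_1): y_i for i > l, beta_i for i <= l.\<close>
definition comb_args :: "nat \<Rightarrow> nat \<Rightarrow> (nat \<Rightarrow> 'a) \<Rightarrow> (nat \<Rightarrow> 'a) \<Rightarrow> nat \<Rightarrow> 'a" where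
  "comb_args M l y \<beta> = restrict (\<lambda>i. if i \<le> l then \<beta> i else y i) {1..M}"

text \<open>The last M arguments for v_{j_l}(z_l, z_{l-1},...,z_1, beta_M,...,beta_l):
  position y_i (i = M..1) receives z_{i-(M+1-l)} if i > M+1-l, and beta_{i+l-1} otherwise.\<close>
definition fac_args :: "nat \<Rightarrow> nat \<Rightarrow> (nat \<Rightarrow> 'a) \<Rightarrow> (nat \<Rightarrow> 'a) \<Rightarrow> nat \<Rightarrow> 'a" where
  "fac_args M l z \<beta> =
     restrict (\<lambda>i. if M + 1 - l < i then z (i - (M + 1 - l)) else \<beta> (i + l - 1)) {1..M}"

definition fac :: "('j \<Rightarrow> 'a \<Rightarrow> (nat \<Rightarrow> 'a) \<Rightarrow> real) \<Rightarrow> nat \<Rightarrow> (nat \<Rightarrow> 'a) \<Rightarrow> nat \<Rightarrow> 'j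
                   \<Rightarrow> (nat \<Rightarrow> 'a) \<Rightarrow> real" where
  "fac v M \<beta> l j z = v j (z l) (fac_args M l z \<beta>)"

end

(*
  The variable z_r occurs only in the last factor, as its first argument.
  Freezing w = (z_(r-1), ..., z_1) therefore turns a vanishing combination of the products into
  a relation sum_q C_q(w) v_q(z_r, A w) = 0, where A w = (z_(r-1), ..., z_1, beta_M, ..., beta_r)
  and q ranges over J_r, valid on the section of Z_r at w; by Tonelli these sections have
  positive measure for all w in a set E of positive measure.  If two of the functions
  v_q(-, A w) agree for every w in a subset of E of positive measure, then (b5), with w
  relabelled as the free variables y, shows that the two factors coincide identically.
  Otherwise they are pairwise distinct for almost every w in E, and (b5) with l = M forces every
  C_q(w) to vanish there; as C_q is a combination of products of the first r - 1 factors, the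
  induction hypothesis applies.  Continuity (b6) makes the coincidence sets measurable.  The
  argument yields two identical factors in one slot, which is more than the claimed dependence.
*)

theory Submission
  imports Defs
begin

lemma (in product_sigma_finite) distr_PiM_reindex_bij:
  assumes "finite I" and t: "bij_betw t J I"
  shows "distr (PiM I M) (PiM J (\<lambda>n. M (t n))) (\<lambda>\<omega>. \<lambda>n\<in>J. \<omega> (t n)) = PiM J (\<lambda>n. M (t n))"
proof (rule product_sigma_finite.PiM_eqI)
  show "product_sigma_finite (\<lambda>n. M (t n))"
    by (simp add: product_sigma_finite_def sigma_finite_measures)
  show "finite J"
    using assms bij_betw_finite by blast
  have meas: "(\<lambda>\<omega>. \<lambda>n\<in>J. \<omega> (t n)) \<in> measurable (PiM I M) (PiM J (\<lambda>n. M (t n)))"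
    using t by (auto simp: bij_betw_def intro!: measurable_restrict measurable_component_singleton)
  fix A assume A: "\<And>n. n \<in> J \<Longrightarrow> A n \<in> sets (M (t n))"
  let ?s = "the_inv_into J t"
  have s: "\<And>i. i \<in> I \<Longrightarrow> ?s i \<in> J \<and> t (?s i) = i" "\<And>n. n \<in> J \<Longrightarrow> ?s (t n) = n"
    using t by (auto simp: bij_betw_def the_inv_into_f_f f_the_inv_into_f the_inv_into_into)
  have As: "A (?s i) \<in> sets (M i)" if "i \<in> I" for i
    using A s(1)[OF that] by metis
  have "(\<lambda>\<omega>. \<lambda>n\<in>J. \<omega> (t n)) -` PiE J A \<inter> space (PiM I M) = PiE I (\<lambda>i. A (?s i))"
  proof (intro set_eqI iffI)
    fix x assume x: "x \<in> (\<lambda>\<omega>. \<lambda>n\<in>J. \<omega> (t n)) -` PiE J A \<inter> space (PiM I M)"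
    have "x i \<in> A (?s i)" if "i \<in> I" for i
      using x s(1)[OF that] by (auto simp: PiE_iff)
    with x show "x \<in> PiE I (\<lambda>i. A (?s i))"
      by (simp add: space_PiM PiE_iff)
  next
    fix x assume x: "x \<in> PiE I (\<lambda>i. A (?s i))"
    have "x (t n) \<in> A n" if "n \<in> J" for n
      using x s(2)[OF that] t that by (auto simp: PiE_iff bij_betw_def) (metis)
    with x show "x \<in> (\<lambda>\<omega>. \<lambda>n\<in>J. \<omega> (t n)) -` PiE J A \<inter> space (PiM I M)"
      using As[THEN sets.sets_into_space] by (auto simp: space_PiM PiE_iff)
  qed
  then have "emeasure (distr (PiM I M) (PiM J (\<lambda>n. M (t n))) (\<lambda>\<omega>. \<lambda>n\<in>J. \<omega> (t n))) (PiE J A)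
      = (\<Prod>i\<in>I. emeasure (M i) (A (?s i)))"
    using A As \<open>finite J\<close> \<open>finite I\<close> by (subst emeasure_distr[OF meas]) (auto intro!: sets_PiM_I_finite emeasure_PiM)
  also have "\<dots> = (\<Prod>n\<in>J. emeasure (M (t n)) (A n))"
    using s by (subst prod.reindex_bij_betw[OF t, symmetric]) simp
  finally show "emeasure (distr (PiM I M) (PiM J (\<lambda>n. M (t n))) (\<lambda>\<omega>. \<lambda>n\<in>J. \<omega> (t n))) (PiE J A)
      = (\<Prod>n\<in>J. emeasure (M (t n)) (A n))" .
qed simp

lemma sets_PiM_lborel_closedin:
  fixes S :: "(nat \<Rightarrow> 'a::euclidean_space) set"
  assumes "closedin (top_of_set (PiE I (\<lambda>_. UNIV))) S"
  shows "S \<in> sets (PiM I (\<lambda>_. lborel))"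
proof -
  obtain C where C: "closed C" "S = PiE I (\<lambda>_. UNIV) \<inter> C"
    using assms by (auto simp: closedin_closed)
  have "(\<lambda>y. restrict y I) \<in> borel_measurable (PiM I (\<lambda>_. lborel::'a measure))"
  proof (rule measurable_coordinatewise_then_product)
    fix i
    show "(\<lambda>y. restrict y I i) \<in> borel_measurable (PiM I (\<lambda>_. lborel::'a measure))"
      by (cases "i \<in> I") (auto simp: measurable_component_singleton[where M="\<lambda>_. lborel", simplified])
  qed
  then have "(\<lambda>y. restrict y I) -` C \<inter> space (PiM I (\<lambda>_. lborel)) \<in> sets (PiM I (\<lambda>_. lborel))"
    using C(1) by (intro measurable_sets) auto
  also have "(\<lambda>y. restrict y I) -` C \<inter> space (PiM I (\<lambda>_. lborel)) = S"
    using C(2) by (auto simp: space_PiM PiE_iff extensional_restrict)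
  finally show ?thesis .
qed

lemma pos_meas_shift_PiM_lborel:
  fixes W :: "(nat \<Rightarrow> 'a::euclidean_space) set"
  assumes W: "W \<in> sets (PiM {1..r} (\<lambda>_. lborel))" "0 < emeasure (PiM {1..r} (\<lambda>_. lborel)) W"
  shows "pos_meas (tupM {Suc l..r + l})
           ((\<lambda>y. \<lambda>k\<in>{1..r}. y (k + l)) -` W \<inter> space (PiM {Suc l..r + l} (\<lambda>_. lborel)))"
proof -
  let ?P = "PiM {1..r} (\<lambda>_. lborel::'a measure)"
  let ?P' = "PiM {Suc l..r + l} (\<lambda>_. lborel::'a measure)"
  let ?shift = "\<lambda>y. \<lambda>k\<in>{1..r}. y (k + l)"
  interpret product_sigma_finite "\<lambda>_. lborel::'a measure"
    by (simp add: product_sigma_finite_def sigma_finite_lborel)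
  have bij: "bij_betw (\<lambda>k. k + l) {1..r} {Suc l..r + l}"
    unfolding bij_betw_def by (simp add: inj_on_def image_add_atLeastAtMost)
  have shift: "?shift \<in> measurable ?P' ?P"
    using bij by (auto simp: bij_betw_def intro!: measurable_restrict measurable_component_singleton)
  define Y where "Y = ?shift -` W \<inter> space ?P'"
  have "emeasure ?P' Y = emeasure (distr ?P' ?P ?shift) W"
    unfolding Y_def using W(1) by (rule emeasure_distr[OF shift, symmetric])
  also have "distr ?P' ?P ?shift = ?P"
    using distr_PiM_reindex_bij[OF _ bij] by simp
  finally have "emeasure ?P' Y = emeasure ?P W" .
  moreover have "Y \<in> sets ?P'"
    unfolding Y_def using shift W(1) by (rule measurable_sets)
  ultimately show ?thesis
    unfolding Y_def[symmetric] pos_meas_def tupM_def using W(2) by simp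
qed

lemma (in product_sigma_finite) positive_sections_PiM_insert:
  assumes I: "finite I" "i \<notin> I"
    and Z: "Z \<in> sets (PiM (insert i I) M)" "0 < emeasure (PiM (insert i I) M) Z"
  obtains E where "E \<in> sets (PiM I M)" "0 < emeasure (PiM I M) E"
    "\<And>w. w \<in> E \<Longrightarrow> 0 < emeasure (M i) {x \<in> space (M i). w(i := x) \<in> Z}"
proof -
  define G where "G w = (\<integral>\<^sup>+ x. indicator Z (w(i := x)) \<partial>M i)" for w
  have G_measurable: "G \<in> borel_measurable (PiM I M)"
  proof -
    have "(\<lambda>(w, x). indicator Z (w(i := x)) :: ennreal) \<in> borel_measurable (PiM I M \<Otimes>\<^sub>M M i)"
      using measurable_compose[OF measurable_add_dim borel_measurable_indicator[OF Z(1)]]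
      by (simp add: case_prod_unfold)
    then show ?thesis
      unfolding G_def by (rule sigma_finite_measure.borel_measurable_nn_integral[OF sigma_finite_measures])
  qed
  have G_section: "G w = emeasure (M i) {x \<in> space (M i). w(i := x) \<in> Z}" if "w \<in> space (PiM I M)" for w
  proof -
    have "{x \<in> space (M i). w(i := x) \<in> Z} = (\<lambda>x. w(i := x)) -` Z \<inter> space (M i)"
      by auto
    also have "\<dots> \<in> sets (M i)"
      using measurable_component_update[OF that I(2)] Z(1) by (rule measurable_sets)
    finally have "G w = (\<integral>\<^sup>+ x. indicator {x \<in> space (M i). w(i := x) \<in> Z} x \<partial>M i)"
      and "{x \<in> space (M i). w(i := x) \<in> Z} \<in> sets (M i)"
      unfolding G_def by (auto intro!: nn_integral_cong simp: indicator_def)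
    then show ?thesis
      by simp
  qed
  define E where "E = {w \<in> space (PiM I M). 0 < G w}"
  have E_sets: "E \<in> sets (PiM I M)"
    unfolding E_def using G_measurable by measurable
  have "0 < emeasure (PiM I M) E"
  proof (rule ccontr)
    assume "\<not> 0 < emeasure (PiM I M) E"
    then have E_null: "E \<in> null_sets (PiM I M)"
      using E_sets by (auto simp: null_sets_def)
    have "emeasure (PiM (insert i I) M) Z = (\<integral>\<^sup>+ w. G w \<partial>PiM I M)"
      unfolding G_def using Z(1) I by (simp add: product_nn_integral_insert[symmetric])
    also have "\<dots> = (\<integral>\<^sup>+ w. G w * indicator E w \<partial>PiM I M)"
      by (intro nn_integral_cong) (auto simp: E_def indicator_def)
    also have "\<dots> = 0"
      using E_null by (rule nn_integral_null_set)
    finally show False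
      using Z(2) by simp
  qed
  with E_sets show ?thesis
    by (intro that[of E]) (auto simp: E_def G_section)
qed

lemma lin_dep_on_pair:
  assumes "finite F" "j \<in> F" "j' \<in> F" "j \<noteq> j'" "\<And>x. x \<in> D \<Longrightarrow> f j x = f j' x"
  shows "lin_dep_on D F f"
  unfolding lin_dep_on_def
proof (intro exI conjI ballI)
  let ?c = "\<lambda>i. if i = j then 1 else if i = j' then -1 else 0 :: real"
  show "\<exists>i\<in>F. ?c i \<noteq> 0"
    using assms by auto
  fix x assume "x \<in> D"
  have "(\<Sum>i\<in>F. ?c i * f i x) = (\<Sum>i\<in>{j, j'}. ?c i * f i x)"
    using assms by (intro sum.mono_neutral_right) auto
  also have "\<dots> = 0"
    using assms \<open>x \<in> D\<close> by simp
  finally show "(\<Sum>i\<in>F. ?c i * f i x) = 0" .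
qed

lemma lin_dep_on_fibre_restrict:
  assumes "finite S" "S \<subseteq> PiE (insert k I) A" "k \<notin> I" "s0 \<in> S" "c s0 \<noteq> 0"
    and vanish: "\<And>x. x \<in> D \<Longrightarrow> (\<Sum>s\<in>{s \<in> S. s k = s0 k}. c s * f (restrict s I) x) = 0"
  shows "lin_dep_on D ((\<lambda>s. restrict s I) ` {s \<in> S. s k = s0 k}) f"
proof -
  let ?F = "{s \<in> S. s k = s0 k}"
  have extend: "(restrict s I)(k := s0 k) = s" if "s \<in> ?F" for s
  proof
    fix x
    have "s \<in> extensional (insert k I)" "s k = s0 k"
      using that assms(2) by (auto simp: PiE_def)
    then show "((restrict s I)(k := s0 k)) x = s x"
      by (cases "x = k") (auto simp: extensional_def)
  qed
  have "inj_on (\<lambda>s. restrict s I) ?F"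
  proof (rule inj_onI)
    fix s s' assume s: "s \<in> ?F" and s': "s' \<in> ?F" and eq: "restrict s I = restrict s' I"
    have "s = (restrict s I)(k := s0 k)"
      using extend[OF s] by simp
    also have "\<dots> = s'"
      using eq extend[OF s'] by simp
    finally show "s = s'" .
  qed
  then have reindex: "(\<Sum>t\<in>(\<lambda>s. restrict s I) ` ?F. c (t(k := s0 k)) * f t x)
      = (\<Sum>s\<in>?F. c s * f (restrict s I) x)" for x
    using extend by (simp add: sum.reindex)
  show ?thesis
    unfolding lin_dep_on_def
  proof (intro exI[of _ "\<lambda>t. c (t(k := s0 k))"] conjI ballI)
    show "\<exists>t\<in>(\<lambda>s. restrict s I) ` ?F. c (t(k := s0 k)) \<noteq> 0"
      using assms(4,5) extend[of s0] by auto
    show "(\<Sum>t\<in>(\<lambda>s. restrict s I) ` ?F. c (t(k := s0 k)) * f t x) = 0" if "x \<in> D" for x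
      using reindex vanish[OF that] by simp
  qed
qed

lemma sum_mult_group_by:
  fixes h :: "'s \<Rightarrow> 'r::semiring_0"
  assumes "finite S"
  shows "(\<Sum>s\<in>S. h s * g (\<pi> s)) = (\<Sum>q\<in>\<pi> ` S. (\<Sum>s\<in>{s \<in> S. \<pi> s = q}. h s) * g q)"
proof -
  have "(\<Sum>s\<in>S. h s * g (\<pi> s)) = (\<Sum>q\<in>\<pi> ` S. \<Sum>s\<in>{s \<in> S. \<pi> s = q}. h s * g (\<pi> s))"
    by (rule sum.image_gen[OF assms])
  also have "\<dots> = (\<Sum>q\<in>\<pi> ` S. (\<Sum>s\<in>{s \<in> S. \<pi> s = q}. h s) * g q)"
  proof (rule sum.cong[OF refl])
    fix q
    show "(\<Sum>s\<in>{s \<in> S. \<pi> s = q}. h s * g (\<pi> s)) = (\<Sum>s\<in>{s \<in> S. \<pi> s = q}. h s) * g q"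
      by (simp add: sum_distrib_right)
  qed
  finally show ?thesis .
qed

lemma fac_args_local:
  assumes "\<And>i. 1 \<le> i \<Longrightarrow> i < l \<Longrightarrow> z i = z' i"
  shows "fac_args M l z \<beta> = fac_args M l z' \<beta>"
  unfolding fac_args_def using assms by (intro restrict_ext) auto

lemma fac_local:
  assumes "\<And>i. 1 \<le> i \<Longrightarrow> i \<le> l \<Longrightarrow> z i = z' i" "1 \<le> l"
  shows "fac v M \<beta> l j z = fac v M \<beta> l j z'"
  unfolding fac_def using assms fac_args_local[of l z z' M \<beta>] by auto

lemma comb_args_local:
  assumes "\<And>i. l < i \<Longrightarrow> i \<le> M \<Longrightarrow> y i = y' i"
  shows "comb_args M l y b = comb_args M l y' b"
  unfolding comb_args_def using assms by (intro restrict_ext) auto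

lemma comb_args_all_fixed:
  assumes "b \<in> PiE {1..M} (\<lambda>_. UNIV)"
  shows "comb_args M M y b = b"
proof -
  have "comb_args M M y b = restrict b {1..M}"
    unfolding comb_args_def by (intro restrict_ext) auto
  with assms show ?thesis
    by (simp add: PiE_iff extensional_restrict)
qed

lemma fac_args_eq_comb_args:
  assumes "1 \<le> l" "l \<le> M"
  shows "fac_args M l z \<beta> =
    comb_args M (M + 1 - l) (\<lambda>i\<in>{Suc (M + 1 - l)..M}. z (i - (M + 1 - l))) (\<lambda>i. \<beta> (i + l - 1))"
  unfolding fac_args_def comb_args_def using assms by (intro restrict_ext) auto

lemma fac_args_PiE: "fac_args M l z \<beta> \<in> PiE {1..M} (\<lambda>_. UNIV)"
  unfolding fac_args_def by simp

lemma prod_fac_upd_last: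
  "(\<Prod>l\<in>{1..Suc r}. fac v M \<beta> l (s l) (w(Suc r := x)))
     = (\<Prod>l\<in>{1..r}. fac v M \<beta> l (s l) w) * v (s (Suc r)) x (fac_args M (Suc r) w \<beta>)"
proof -
  have "(\<Prod>l\<in>{1..r}. fac v M \<beta> l (s l) (w(Suc r := x))) = (\<Prod>l\<in>{1..r}. fac v M \<beta> l (s l) w)"
    by (intro prod.cong refl fac_local) auto
  moreover have "fac_args M (Suc r) (w(Suc r := x)) \<beta> = fac_args M (Suc r) w \<beta>"
    by (intro fac_args_local) auto
  ultimately show ?thesis
    by (simp add: fac_def mult.commute)
qed

lemma lin_dep_prod_restrict_fibre:
  assumes S: "finite S" "S \<subseteq> PiE {1..Suc r} (\<lambda>_. J)" and s0: "s0 \<in> S" "c s0 \<noteq> 0"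
    and vanish: "\<And>w. w \<in> D \<Longrightarrow>
      (\<Sum>s\<in>{s \<in> S. s (Suc r) = s0 (Suc r)}. c s * (\<Prod>l\<in>{1..r}. fac v M \<beta> l (s l) w)) = 0"
  obtains S' where "finite S'" "S' \<subseteq> PiE {1..r} (\<lambda>_. J)"
    "\<And>l. l \<in> {1..r} \<Longrightarrow> (\<lambda>s. s l) ` S' \<subseteq> (\<lambda>s. s l) ` S"
    "lin_dep_on D S' (\<lambda>s z. \<Prod>l\<in>{1..r}. fac v M \<beta> l (s l) z)"
proof -
  let ?S' = "(\<lambda>s. restrict s {1..r}) ` {s \<in> S. s (Suc r) = s0 (Suc r)}"
  have "lin_dep_on D ?S' (\<lambda>s z. \<Prod>l\<in>{1..r}. fac v M \<beta> l (s l) z)"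
  proof (rule lin_dep_on_fibre_restrict[of S "Suc r" "{1..r}" "\<lambda>_. J" s0 c, OF S(1) _ _ s0])
    show "S \<subseteq> PiE (insert (Suc r) {1..r}) (\<lambda>_. J)"
      using S(2) by (simp add: atLeastAtMostSuc_conv)
    show "(\<Sum>s\<in>{s \<in> S. s (Suc r) = s0 (Suc r)}. c s * (\<Prod>l\<in>{1..r}. fac v M \<beta> l (restrict s {1..r} l) w)) = 0"
      if "w \<in> D" for w
      using vanish[OF that] by simp
  qed simp
  moreover have "finite ?S'" "?S' \<subseteq> PiE {1..r} (\<lambda>_. J)"
    using S by (auto simp: PiE_iff)
  moreover have "(\<lambda>s. s l) ` ?S' \<subseteq> (\<lambda>s. s l) ` S" if "l \<in> {1..r}" for l
    using that by auto
  ultimately show ?thesis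
    using that by blast
qed

lemma pos_meas_lebesgue_if_lborel_pos:
  assumes "0 < emeasure lborel A"
  shows "pos_meas lebesgue A"
proof -
  have "A \<in> sets lborel"
    using assms by (metis emeasure_notin_sets less_irrefl)
  with assms show ?thesis
    unfolding pos_meas_def by simp
qed

lemma measurable_fac_args:
  "(\<lambda>w. fac_args M (Suc r) w \<beta>)
     \<in> measurable (PiM {1..r} (\<lambda>_. lborel)) (PiM {1..M} (\<lambda>_. lborel::'a::euclidean_space measure))"
  unfolding fac_args_def
proof (rule measurable_restrict)
  fix i assume i: "i \<in> {1..M}"
  show "(\<lambda>w. if M + 1 - Suc r < i then w (i - (M + 1 - Suc r)) else \<beta> (i + Suc r - 1))
      \<in> measurable (PiM {1..r} (\<lambda>_. lborel)) (lborel::'a measure)"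
  proof (cases "M + 1 - Suc r < i")
    case True
    with i have "i - (M + 1 - Suc r) \<in> {1..r}"
      by auto
    with True show ?thesis
      by (simp add: measurable_component_singleton)
  qed simp
qed

definition equal_factors ::
    "('j \<Rightarrow> 'a \<Rightarrow> (nat \<Rightarrow> 'a) \<Rightarrow> real) \<Rightarrow> nat \<Rightarrow> (nat \<Rightarrow> 'a) \<Rightarrow> nat \<Rightarrow> (nat \<Rightarrow> 'j) set \<Rightarrow> bool" where
  "equal_factors v M \<beta> l S \<longleftrightarrow>
     (\<exists>j\<in>(\<lambda>s. s l) ` S. \<exists>j'\<in>(\<lambda>s. s l) ` S. j \<noteq> j' \<and> fac v M \<beta> l j = fac v M \<beta> l j')"

locale lin_indep_family =
  fixes v :: "'j \<Rightarrow> 'a::euclidean_space \<Rightarrow> (nat \<Rightarrow> 'a) \<Rightarrow> real"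
    and J :: "'j set" and M :: nat
  assumes b5: "\<And>l \<beta> Z Y J0. 1 \<le> l \<Longrightarrow> l \<le> M \<Longrightarrow> pos_meas lebesgue Z \<Longrightarrow>
              pos_meas (tupM {Suc l..M}) Y \<Longrightarrow> finite J0 \<Longrightarrow> J0 \<subseteq> J \<Longrightarrow>
              lin_dep_on (Z \<times> Y) J0 (\<lambda>j (z, y). v j z (comb_args M l y \<beta>)) \<Longrightarrow>
              (\<exists>j\<in>J0. \<exists>j'\<in>J0. j \<noteq> j' \<and>
                 (\<forall>z. \<forall>y\<in>PiE {Suc l..M} (\<lambda>_. UNIV).
                    v j z (comb_args M l y \<beta>) = v j' z (comb_args M l y \<beta>)))"
    and b6: "\<And>j z. j \<in> J \<Longrightarrow> continuous_on (PiE {1..M} (\<lambda>_. UNIV)) (v j z)"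

context lin_indep_family
begin

lemma coeffs_vanish_if_distinct:
  assumes "1 \<le> M" and y: "y \<in> PiE {1..M} (\<lambda>_. UNIV)"
    and "pos_meas lebesgue Z" "finite Q" "Q \<subseteq> J"
    and distinct: "\<And>q q'. q \<in> Q \<Longrightarrow> q' \<in> Q \<Longrightarrow> q \<noteq> q' \<Longrightarrow> \<exists>x. v q x y \<noteq> v q' x y"
    and vanish: "\<And>x. x \<in> Z \<Longrightarrow> (\<Sum>q\<in>Q. C q * v q x y) = 0"
    and "q \<in> Q"
  shows "C q = 0"
proof (rule ccontr)
  assume "C q \<noteq> 0"
  \<comment> \<open>(b5) with l = M: the free variables range over the one-point space (R^d)^0.\<close>
  have "pos_meas (tupM {Suc M..M}) {\<lambda>_. undefined}"
    unfolding pos_meas_def tupM_def by (simp add: sets_PiM_empty)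
  moreover have "lin_dep_on (Z \<times> {\<lambda>_. undefined}) Q (\<lambda>q (x, y'). v q x (comb_args M M y' y))"
    unfolding lin_dep_on_def comb_args_all_fixed[OF y]
    using \<open>q \<in> Q\<close> \<open>C q \<noteq> 0\<close> vanish by (intro exI[of _ C]) auto
  ultimately obtain q1 q2 where "q1 \<in> Q" "q2 \<in> Q" "q1 \<noteq> q2"
      "\<forall>x. \<forall>y'\<in>PiE {Suc M..M} (\<lambda>_. UNIV). v q1 x (comb_args M M y' y) = v q2 x (comb_args M M y' y)"
    using b5[OF assms(1) order_refl assms(3) _ assms(4,5)] by blast
  then show False
    using distinct by (auto simp: comb_args_all_fixed[OF y])
qed

lemma sets_coincidence_set:
  assumes "q \<in> J" "q' \<in> J"
  shows "{w \<in> space (PiM {1..r} (\<lambda>_. lborel)).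
            \<forall>x. v q x (fac_args M (Suc r) w \<beta>) = v q' x (fac_args M (Suc r) w \<beta>)}
         \<in> sets (PiM {1..r} (\<lambda>_. lborel))"
proof -
  let ?C = "{y \<in> PiE {1..M} (\<lambda>_. UNIV). \<forall>x. v q x y = v q' x y}"
  have "?C = (\<Inter>x. {y \<in> PiE {1..M} (\<lambda>_. UNIV). v q x y - v q' x y = 0})"
    by auto
  moreover have "closedin (top_of_set (PiE {1..M} (\<lambda>_. UNIV)))
      (\<Inter>x. {y \<in> PiE {1..M} (\<lambda>_. UNIV). v q x y - v q' x y = 0})"
    using assms by (intro closedin_INT continuous_closedin_preimage_constant continuous_on_diff b6) auto
  ultimately have "?C \<in> sets (PiM {1..M} (\<lambda>_. lborel))"
    by (simp add: sets_PiM_lborel_closedin)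
  from measurable_sets[OF measurable_fac_args this]
  have "(\<lambda>w. fac_args M (Suc r) w \<beta>) -` ?C \<inter> space (PiM {1..r} (\<lambda>_. lborel))
      \<in> sets (PiM {1..r} (\<lambda>_. lborel))" .
  moreover have "(\<lambda>w. fac_args M (Suc r) w \<beta>) -` ?C
      = {w. \<forall>x. v q x (fac_args M (Suc r) w \<beta>) = v q' x (fac_args M (Suc r) w \<beta>)}"
    using fac_args_PiE[of M "Suc r" _ \<beta>] by auto
  ultimately show ?thesis
    by (simp add: Collect_conj_eq Int_commute)
qed

lemma fac_eq_if_eq_on_positive_measure:
  assumes "r < M" "q \<in> J" "q' \<in> J" "q \<noteq> q'"
    and W: "W \<in> sets (PiM {1..r} (\<lambda>_. lborel))" "0 < emeasure (PiM {1..r} (\<lambda>_. lborel)) W"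
    and coincide: "\<And>w x. w \<in> W \<Longrightarrow> v q x (fac_args M (Suc r) w \<beta>) = v q' x (fac_args M (Suc r) w \<beta>)"
  shows "fac v M \<beta> (Suc r) q = fac v M \<beta> (Suc r) q'"
proof -
  define l where "l = M - r"
  have l: "1 \<le> l" "l \<le> M" "M + 1 - Suc r = l" "r + l = M"
    using assms(1) by (auto simp: l_def)
  \<comment> \<open>Moved to the positions l + 1, ..., M, the frozen variables w play the role of y in (b5).\<close>
  let ?shift = "\<lambda>y. \<lambda>k\<in>{1..r}. y (k + l)"
  define Y where "Y = ?shift -` W \<inter> space (PiM {Suc l..M} (\<lambda>_. lborel))"
  have Y: "pos_meas (tupM {Suc l..M}) Y"
    unfolding Y_def using pos_meas_shift_PiM_lborel[OF W, of l] l(4) by simp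
  let ?\<beta> = "\<lambda>i. \<beta> (i + Suc r - 1)"
  have args: "fac_args M (Suc r) w \<beta> = comb_args M l (\<lambda>i\<in>{Suc l..M}. w (i - l)) ?\<beta>" for w
    using fac_args_eq_comb_args[of "Suc r" M w \<beta>, unfolded l(3)] assms(1) by simp
  have "lin_dep_on (UNIV \<times> Y) {q, q'} (\<lambda>j (x, y). v j x (comb_args M l y ?\<beta>))"
  proof (rule lin_dep_on_pair)
    fix p :: "'a \<times> (nat \<Rightarrow> 'a)" assume "p \<in> UNIV \<times> Y"
    then obtain x y where p: "p = (x, y)" and "?shift y \<in> W"
      unfolding Y_def by auto
    moreover have "fac_args M (Suc r) (?shift y) \<beta> = comb_args M l y ?\<beta>"
      unfolding args by (intro comb_args_local) (auto simp: l_def)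
    ultimately show "(case p of (x, y) \<Rightarrow> v q x (comb_args M l y ?\<beta>))
        = (case p of (x, y) \<Rightarrow> v q' x (comb_args M l y ?\<beta>))"
      using coincide by fastforce
  qed (use assms in auto)
  then have "\<exists>j\<in>{q, q'}. \<exists>j'\<in>{q, q'}. j \<noteq> j' \<and>
      (\<forall>x. \<forall>y\<in>PiE {Suc l..M} (\<lambda>_. UNIV). v j x (comb_args M l y ?\<beta>) = v j' x (comb_args M l y ?\<beta>))"
    using assms(2,3) by (intro b5[OF l(1,2) _ Y]) (auto simp: pos_meas_def)
  then show ?thesis
    unfolding fac_def args by auto
qed

lemma equal_factors_or_distinct_on_positive_measure:
  assumes "r < M" "finite Q" "Q \<subseteq> J"
    and E: "E \<in> sets (PiM {1..r} (\<lambda>_. lborel))" "0 < emeasure (PiM {1..r} (\<lambda>_. lborel)) E"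
  obtains q q' where "q \<in> Q" "q' \<in> Q" "q \<noteq> q'" "fac v M \<beta> (Suc r) q = fac v M \<beta> (Suc r) q'"
  | E' where "E' \<subseteq> E" "E' \<in> sets (PiM {1..r} (\<lambda>_. lborel))" "0 < emeasure (PiM {1..r} (\<lambda>_. lborel)) E'"
      "\<And>w q q'. w \<in> E' \<Longrightarrow> q \<in> Q \<Longrightarrow> q' \<in> Q \<Longrightarrow> q \<noteq> q' \<Longrightarrow>
         \<exists>x. v q x (fac_args M (Suc r) w \<beta>) \<noteq> v q' x (fac_args M (Suc r) w \<beta>)"
proof -
  let ?P = "PiM {1..r} (\<lambda>_. lborel::'a measure)"
  define K where "K q q' = E \<inter> {w \<in> space ?P. \<forall>x. v q x (fac_args M (Suc r) w \<beta>) = v q' x (fac_args M (Suc r) w \<beta>)}"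
    for q q'
  have K: "K q q' \<in> sets ?P" if "q \<in> Q" "q' \<in> Q" for q q'
    unfolding K_def using E(1) sets_coincidence_set that assms(3) by blast
  show ?thesis
  proof (cases "\<exists>q\<in>Q. \<exists>q'\<in>Q. q \<noteq> q' \<and> 0 < emeasure ?P (K q q')")
    case True
    then obtain q q' where "q \<in> Q" "q' \<in> Q" "q \<noteq> q'" "0 < emeasure ?P (K q q')"
      by blast
    with K assms(1,3) show ?thesis
      by (intro that(1)[of q q'] fac_eq_if_eq_on_positive_measure[of r q q' "K q q'"]) (auto simp: K_def)
  next
    case False
    define N where "N = (\<Union>q\<in>Q. \<Union>q'\<in>Q - {q}. K q q')"
    have N: "N \<in> null_sets ?P"
      unfolding N_def using False K assms(2) by (intro null_sets.finite_UN) (auto simp: null_sets_def)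
    show ?thesis
    proof (rule that(2)[of "E - N"])
      show "E - N \<in> sets ?P" "0 < emeasure ?P (E - N)"
        using E N by (auto simp: emeasure_Diff_null_set)
      show "\<exists>x. v q x (fac_args M (Suc r) w \<beta>) \<noteq> v q' x (fac_args M (Suc r) w \<beta>)"
        if "w \<in> E - N" "q \<in> Q" "q' \<in> Q" "q \<noteq> q'" for w q q'
      proof (rule ccontr)
        assume "\<not> ?thesis"
        with that sets.sets_into_space[OF E(1)] have "w \<in> K q q'"
          unfolding K_def by auto
        with that show False
          unfolding N_def by blast
      qed
    qed blast
  qed
qed

lemma lin_dep_prod_Suc_cases:
  assumes "Suc r \<le> M"
    and Z: "Z \<in> sets (PiM {1..Suc r} (\<lambda>_. lborel))" "0 < emeasure (PiM {1..Suc r} (\<lambda>_. lborel)) Z"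
    and S: "finite S" "S \<subseteq> PiE {1..Suc r} (\<lambda>_. J)"
    and dep: "lin_dep_on Z S (\<lambda>s z. \<Prod>l\<in>{1..Suc r}. fac v M \<beta> l (s l) z)"
  obtains "equal_factors v M \<beta> (Suc r) S"
  | E' S' where "E' \<in> sets (PiM {1..r} (\<lambda>_. lborel))" "0 < emeasure (PiM {1..r} (\<lambda>_. lborel)) E'"
      "finite S'" "S' \<subseteq> PiE {1..r} (\<lambda>_. J)" "\<And>l. l \<in> {1..r} \<Longrightarrow> (\<lambda>s. s l) ` S' \<subseteq> (\<lambda>s. s l) ` S"
      "lin_dep_on E' S' (\<lambda>s z. \<Prod>l\<in>{1..r}. fac v M \<beta> l (s l) z)"
proof -
  let ?P = "PiM {1..r} (\<lambda>_. lborel::'a measure)"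
  let ?A = "\<lambda>w. fac_args M (Suc r) w \<beta>"
  interpret product_sigma_finite "\<lambda>_. lborel::'a measure"
    by (simp add: product_sigma_finite_def sigma_finite_lborel)
  obtain c where c: "\<exists>s\<in>S. c s \<noteq> 0"
      "\<And>z. z \<in> Z \<Longrightarrow> (\<Sum>s\<in>S. c s * (\<Prod>l\<in>{1..Suc r}. fac v M \<beta> l (s l) z)) = 0"
    using dep unfolding lin_dep_on_def by blast
  define Q where "Q = (\<lambda>s. s (Suc r)) ` S"
  define C where "C w q = (\<Sum>s\<in>{s \<in> S. s (Suc r) = q}. c s * (\<Prod>l\<in>{1..r}. fac v M \<beta> l (s l) w))"
    for w q
  have Q: "finite Q" "Q \<subseteq> J"
    using S by (auto simp: Q_def PiE_iff)
  have fibre_relation: "(\<Sum>q\<in>Q. C w q * v q x (?A w)) = 0" if "w(Suc r := x) \<in> Z" for w x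
    using c(2)[OF that] sum_mult_group_by[OF S(1), of "\<lambda>s. c s * (\<Prod>l\<in>{1..r}. fac v M \<beta> l (s l) w)"
        "\<lambda>q. v q x (?A w)" "\<lambda>s. s (Suc r)"]
    unfolding prod_fac_upd_last by (simp add: mult.assoc Q_def C_def)
  obtain E where E: "E \<in> sets ?P" "0 < emeasure ?P E"
    and fibre_pos: "\<And>w. w \<in> E \<Longrightarrow> 0 < emeasure lborel {x. w(Suc r := x) \<in> Z}"
    using positive_sections_PiM_insert[of "{1..r}" "Suc r" Z] Z by (auto simp: atLeastAtMostSuc_conv)
  show ?thesis
  proof (rule equal_factors_or_distinct_on_positive_measure[OF _ Q E, of \<beta>])
    show "r < M"
      using assms(1) by simp
  next
    fix q q' assume "q \<in> Q" "q' \<in> Q" "q \<noteq> q'" "fac v M \<beta> (Suc r) q = fac v M \<beta> (Suc r) q'"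
    then show ?thesis
      using that(1) unfolding equal_factors_def Q_def by blast
  next
    fix E' assume E': "E' \<subseteq> E" "E' \<in> sets ?P" "0 < emeasure ?P E'"
      and distinct: "\<And>w q q'. w \<in> E' \<Longrightarrow> q \<in> Q \<Longrightarrow> q' \<in> Q \<Longrightarrow> q \<noteq> q' \<Longrightarrow>
         \<exists>x. v q x (?A w) \<noteq> v q' x (?A w)"
    have C_zero: "C w q = 0" if "w \<in> E'" "q \<in> Q" for w q
    proof (rule coeffs_vanish_if_distinct[OF _ fac_args_PiE _ Q])
      show "1 \<le> M"
        using assms(1) by simp
      show "pos_meas lebesgue {x. w(Suc r := x) \<in> Z}"
        using fibre_pos E'(1) that(1) by (blast intro: pos_meas_lebesgue_if_lborel_pos)
    qed (use distinct that fibre_relation in auto)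
    obtain s0 where s0: "s0 \<in> S" "c s0 \<noteq> 0"
      using c(1) by blast
    have "(\<Sum>s\<in>{s \<in> S. s (Suc r) = s0 (Suc r)}. c s * (\<Prod>l\<in>{1..r}. fac v M \<beta> l (s l) w)) = 0"
      if "w \<in> E'" for w
      using C_zero[OF that, of "s0 (Suc r)"] s0(1) by (simp add: C_def Q_def)
    from lin_dep_prod_restrict_fibre[OF S s0 this] show ?thesis
      using that(2)[OF E'(2,3)] by blast
  qed
qed

lemma lin_dep_prod_imp_equal_factors:
  assumes "r \<le> M"
    and "Z \<in> sets (PiM {1..r} (\<lambda>_. lborel))" "0 < emeasure (PiM {1..r} (\<lambda>_. lborel)) Z"
    and "finite S" "S \<subseteq> PiE {1..r} (\<lambda>_. J)"
    and "lin_dep_on Z S (\<lambda>s z. \<Prod>l\<in>{1..r}. fac v M \<beta> l (s l) z)"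
  shows "\<exists>l\<in>{1..r}. equal_factors v M \<beta> l S"
  using assms
proof (induction r arbitrary: Z S)
  case 0
  obtain c where c: "\<exists>s\<in>S. c s \<noteq> 0" "\<forall>z\<in>Z. (\<Sum>s\<in>S. c s * (\<Prod>l\<in>{1..0}. fac v M \<beta> l (s l) z)) = 0"
    using 0(6) unfolding lin_dep_on_def by blast
  then obtain s where "s \<in> S" "c s \<noteq> 0"
    by blast
  moreover have "S = {s}"
    using 0(5) \<open>s \<in> S\<close> by auto
  moreover have "Z \<noteq> {}"
    using 0(3) by auto
  ultimately show ?case
    using c(2) by auto
next
  case (Suc r)
  show ?case
  proof (rule lin_dep_prod_Suc_cases[OF Suc.prems])
    show "equal_factors v M \<beta> (Suc r) S \<Longrightarrow> ?case"
      by auto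
  next
    fix E' S'
    assume E': "E' \<in> sets (PiM {1..r} (\<lambda>_. lborel))" "0 < emeasure (PiM {1..r} (\<lambda>_. lborel)) E'"
      and S': "finite S'" "S' \<subseteq> PiE {1..r} (\<lambda>_. J)"
      and images: "\<And>l. l \<in> {1..r} \<Longrightarrow> (\<lambda>s. s l) ` S' \<subseteq> (\<lambda>s. s l) ` S"
      and dep: "lin_dep_on E' S' (\<lambda>s z. \<Prod>l\<in>{1..r}. fac v M \<beta> l (s l) z)"
    have "r \<le> M"
      using Suc.prems(1) by simp
    from Suc.IH[OF this E' S' dep] obtain l where l: "l \<in> {1..r}" and "equal_factors v M \<beta> l S'"
      by blast
    with images[OF l] have "equal_factors v M \<beta> l S"
      unfolding equal_factors_def by (meson subsetD)
    with l show ?case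
      by auto
  qed
qed

end

theorem lemma3:
  fixes v :: "'j \<Rightarrow> 'a::euclidean_space \<Rightarrow> (nat \<Rightarrow> 'a) \<Rightarrow> real"
    and J :: "'j set" and M :: nat
  assumes M2: "M \<ge> 2"
    and b1: "\<And>j z y. j \<in> J \<Longrightarrow> y \<in> PiE {1..M} (\<lambda>_. UNIV) \<Longrightarrow> v j z y > 0"
    and b4: "\<exists>Y. full_meas (tupM {1..M}) Y \<and>
              (\<forall>Y' Z J0. Y' \<subseteq> Y \<longrightarrow> pos_meas (tupM {1..M}) Y' \<longrightarrow> pos_meas lebesgue Z \<longrightarrow>
                 finite J0 \<longrightarrow> J0 \<subseteq> J \<longrightarrow>
                 \<not> lin_dep_on (Z \<times> Y') J0 (\<lambda>j (z, y). v j z y))"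
    and b5: "\<And>l \<beta> Z Y J0. 1 \<le> l \<Longrightarrow> l \<le> M \<Longrightarrow> pos_meas lebesgue Z \<Longrightarrow>
              pos_meas (tupM {Suc l..M}) Y \<Longrightarrow> finite J0 \<Longrightarrow> J0 \<subseteq> J \<Longrightarrow>
              lin_dep_on (Z \<times> Y) J0 (\<lambda>j (z, y). v j z (comb_args M l y \<beta>)) \<Longrightarrow>
              (\<exists>j\<in>J0. \<exists>j'\<in>J0. j \<noteq> j' \<and>
                 (\<forall>z. \<forall>y\<in>PiE {Suc l..M} (\<lambda>_. UNIV).
                    v j z (comb_args M l y \<beta>) = v j' z (comb_args M l y \<beta>)))"
    and b6: "\<And>j z. j \<in> J \<Longrightarrow> continuous_on (PiE {1..M} (\<lambda>_. UNIV)) (v j z)"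
  shows "\<forall>r \<beta> Zr S0. 2 \<le> r \<longrightarrow> r \<le> M \<longrightarrow> pos_meas (tupM {1..r}) Zr \<longrightarrow>
           finite S0 \<longrightarrow> S0 \<subseteq> PiE {1..r} (\<lambda>_. J) \<longrightarrow>
           lin_dep_on Zr S0 (\<lambda>s z. \<Prod>l\<in>{1..r}. fac v M \<beta> l (s l) z) \<longrightarrow>
           (\<exists>l\<in>{1..r}. lin_dep_on ((\<lambda>z. restrict z {1..l}) ` Zr) ((\<lambda>s. s l) ` S0)
                          (\<lambda>j z. fac v M \<beta> l j z))"
proof (intro allI impI)
  interpret lin_indep_family v J M
    using b5 b6 by unfold_locales
  fix r \<beta> Zr and S0 :: "(nat \<Rightarrow> 'j) set"
  assume "2 \<le> r" "r \<le> M" "pos_meas (tupM {1..r}) Zr" "finite S0" "S0 \<subseteq> PiE {1..r} (\<lambda>_. J)"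
    and dep: "lin_dep_on Zr S0 (\<lambda>s z. \<Prod>l\<in>{1..r}. fac v M \<beta> l (s l) z)"
  let ?P = "PiM {1..r} (\<lambda>_. lborel::'a measure)"
  let ?Z0 = "main_part ?P Zr"
  have Zr: "Zr \<in> sets (completion ?P)" "0 < emeasure (completion ?P) Zr"
    using \<open>pos_meas (tupM {1..r}) Zr\<close> unfolding pos_meas_def tupM_def by auto
  then have "?Z0 \<in> sets ?P" "0 < emeasure ?P ?Z0"
    by auto
  moreover have "?Z0 \<subseteq> Zr"
    using main_part_null_part_Un[OF Zr(1)] by blast
  then have "lin_dep_on ?Z0 S0 (\<lambda>s z. \<Prod>l\<in>{1..r}. fac v M \<beta> l (s l) z)"
    using dep unfolding lin_dep_on_def by blast
  ultimately obtain l where l: "l \<in> {1..r}" and "equal_factors v M \<beta> l S0"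
    using lin_dep_prod_imp_equal_factors \<open>r \<le> M\<close> \<open>finite S0\<close> \<open>S0 \<subseteq> PiE {1..r} (\<lambda>_. J)\<close>
    by blast
  then have "lin_dep_on ((\<lambda>z. restrict z {1..l}) ` Zr) ((\<lambda>s. s l) ` S0) (\<lambda>j z. fac v M \<beta> l j z)"
    using \<open>finite S0\<close> unfolding equal_factors_def by (auto intro: lin_dep_on_pair)
  with l show "\<exists>l\<in>{1..r}. lin_dep_on ((\<lambda>z. restrict z {1..l}) ` Zr) ((\<lambda>s. s l) ` S0)
      (\<lambda>j z. fac v M \<beta> l j z)"
    by blast
qed

end
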